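(* For each $\lambda\in\Lambda$, the operator $R^\varpi_\lambda$ on $\mathcal{V}_\Lambda$ defined by $R^\varpi_\lambda e_\eta=\varpi(\eta,\lambda)e_{\lambda+\eta}$ satisfies $\mathbb{M}_i(R^\varpi_\lambda)>-\infty$ for $i=1,2$.
   Context: Let $\mathbb{K}$ be a real quadratic field with real embeddings $\iota_1,\iota_2$ and Galois involution $c:x\mapsto x'$; let $\theta\in\mathbb{K}$ be a quadratic irrationality and $\Lambda=\{(n+m\theta,n+m\theta'):n,m\in\mathbb{Z}\}$. Let $\omega\in\mathbb{K}^*$ with $\omega\omega'=1$, and $\varpi(\lambda,\eta)=\omega^{(n,m)\wedge(r,k)}$ for $\lambda=(n+m\theta,n+m\theta')$, $\eta=(r+k\theta,r+k\theta')$, where $(a,b)\wedge(c,d)=ad-bc$. Let $\mathcal{V}_\Lambda$ be the $\mathbb{K}$-vector space with basis $\{e_\lambda\}_{\lambda\in\Lambda}$ with the pairing $(v,w)=\sum_\lambda c(a_\lambda)b_\lambda$ for $v=\sum a_\lambda e_\lambda$, $w=\sum b_\lambda e_\lambda$. For a $\mathbb{K}$-linear operator $T$ on $\mathcal{V}_\Lambda$, $\mathbb{M}_i(T):=\inf_{(v,v)=1}\iota_i((Tv,Tv))\in[-\infty,\infty)$. *)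

theory Defs
  imports Complex_Main "HOL-Library.Extended_Real"
begin

text \<open>The real quadratic field K = Q(sqrt d), realised inside the reals via the
first real embedding iota_1 (the inclusion).  Every real quadratic field arises
this way for some positive integer d that is not a perfect square.\<close>

definition qfield :: "nat \<Rightarrow> real set" where
  "qfield d = {of_rat a + of_rat b * sqrt (real d) | a b. True}"

definition gal :: "nat \<Rightarrow> real \<Rightarrow> real" where
  "gal d x = (THE y. \<exists>a b. x = of_rat a + of_rat b * sqrt (real d)
                         \<and> y = of_rat a - of_rat b * sqrt (real d))"

definition emb :: "nat \<Rightarrow> nat \<Rightarrow> real \<Rightarrow> real" where
  "emb d i x = (if i = 1 then x else gal d x)"

definition lat :: "nat \<Rightarrow> real \<Rightarrow> (real \<times> real) set" where
  "lat d \<theta> = {(of_int n + of_int m * \<theta>, of_int n + of_int m * gal d \<theta>) | n m. True}"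

definition latc :: "nat \<Rightarrow> real \<Rightarrow> real \<times> real \<Rightarrow> int \<times> int" where
  "latc d \<theta> l = (THE nm. fst l = of_int (fst nm) + of_int (snd nm) * \<theta>
                        \<and> snd l = of_int (fst nm) + of_int (snd nm) * gal d \<theta>)"

definition wedge :: "int \<times> int \<Rightarrow> int \<times> int \<Rightarrow> int" where
  "wedge p q = fst p * snd q - snd p * fst q"

definition varpi :: "nat \<Rightarrow> real \<Rightarrow> real \<Rightarrow> real \<times> real \<Rightarrow> real \<times> real \<Rightarrow> real" where
  "varpi d \<theta> \<omega> l e = \<omega> powi wedge (latc d \<theta> l) (latc d \<theta> e)"

definition ladd :: "real \<times> real \<Rightarrow> real \<times> real \<Rightarrow> real \<times> real" where
  "ladd l e = (fst l + fst e, snd l + snd e)"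

definition Vspace :: "nat \<Rightarrow> real \<Rightarrow> (real \<times> real \<Rightarrow> real) set" where
  "Vspace d \<theta> = {v. finite {l. v l \<noteq> 0} \<and> {l. v l \<noteq> 0} \<subseteq> lat d \<theta>
                    \<and> (\<forall>l. v l \<in> qfield d)}"

definition bvec :: "real \<times> real \<Rightarrow> real \<times> real \<Rightarrow> real" where
  "bvec l = (\<lambda>x. if x = l then 1 else 0)"

definition pairing :: "nat \<Rightarrow> (real \<times> real \<Rightarrow> real) \<Rightarrow> (real \<times> real \<Rightarrow> real) \<Rightarrow> real" where
  "pairing d v w = (\<Sum>l\<in>{l. v l \<noteq> 0} \<union> {l. w l \<noteq> 0}. gal d (v l) * w l)"

definition Mi :: "nat \<Rightarrow> real \<Rightarrow> nat \<Rightarrow> ((real \<times> real \<Rightarrow> real) \<Rightarrow> (real \<times> real \<Rightarrow> real)) \<Rightarrow> ereal" where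
  "Mi d \<theta> i T = Inf {ereal (emb d i (pairing d (T v) (T v))) | v. v \<in> Vspace d \<theta> \<and> pairing d v v = 1}"

definition Rop :: "nat \<Rightarrow> real \<Rightarrow> real \<Rightarrow> real \<times> real \<Rightarrow> (real \<times> real \<Rightarrow> real) \<Rightarrow> (real \<times> real \<Rightarrow> real)" where
  "Rop d \<theta> \<omega> l v = (\<lambda>x. \<Sum>e\<in>{e. v e \<noteq> 0}. v e * varpi d \<theta> \<omega> e l * bvec (ladd l e) x)"

end

theory Submission
  imports Defs
begin

text \<open>Since \<open>\<omega>\<close> has norm \<open>\<omega>\<omega>' = 1\<close>, every cocycle value \<open>\<varpi>(\<eta>,\<lambda>)\<close> is a power of \<open>\<omega>\<close> and
  has norm 1.  Hence \<open>R\<^sup>\<varpi>\<^sub>\<lambda>\<close> is a weighted shift by unit-norm weights and preserves the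
  pairing: \<open>(R v, R v) = (v, v)\<close>.  So every number in the infimum defining \<open>\<M>\<^sub>i\<close> is
  \<open>\<iota>\<^sub>i(1) = 1\<close>, and \<open>\<M>\<^sub>i(R\<^sup>\<varpi>\<^sub>\<lambda>) \<ge> 1\<close>.\<close>

lemma qfield_coords_unique:
  assumes irr: "sqrt (real d) \<notin> \<rat>"
    and eq: "of_rat a + of_rat b * sqrt (real d) = of_rat a' + of_rat b' * sqrt (real d)"
  shows "a = a' \<and> b = b'"
proof -
  have "b = b'"
  proof (rule ccontr)
    assume "b \<noteq> b'"
    then have "sqrt (real d) = of_rat ((a - a') / (b' - b))"
      using eq by (simp add: of_rat_divide of_rat_diff field_simps)
    then show False using irr by (metis Rats_of_rat)
  qed
  then show ?thesis using eq by simp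
qed

lemma gal_of_coords:
  assumes irr: "sqrt (real d) \<notin> \<rat>"
  shows "gal d (of_rat a + of_rat b * sqrt (real d)) = of_rat a - of_rat b * sqrt (real d)"
  unfolding gal_def
proof (rule the_equality)
  fix y
  assume "\<exists>a' b'. of_rat a + of_rat b * sqrt (real d) = of_rat a' + of_rat b' * sqrt (real d)
                 \<and> y = of_rat a' - of_rat b' * sqrt (real d)"
  then obtain a' b' where "of_rat a + of_rat b * sqrt (real d) = of_rat a' + of_rat b' * sqrt (real d)"
      and "y = of_rat a' - of_rat b' * sqrt (real d)"
    by blast
  with qfield_coords_unique[OF irr this(1)] show "y = of_rat a - of_rat b * sqrt (real d)"
    by simp
qed blast

lemma qfield_one: "1 \<in> qfield d"
  unfolding qfield_def by (rule CollectI, rule exI[of _ 1], rule exI[of _ 0]) simp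

lemma gal_one:
  assumes "sqrt (real d) \<notin> \<rat>"
  shows "gal d 1 = 1"
  using gal_of_coords[OF assms, of 1 0] by simp

lemma qfield_mult_gal_mult:
  assumes irr: "sqrt (real d) \<notin> \<rat>" and x: "x \<in> qfield d" and y: "y \<in> qfield d"
  shows "x * y \<in> qfield d \<and> gal d (x * y) = gal d x * gal d y"
proof -
  obtain a b where x_eq: "x = of_rat a + of_rat b * sqrt (real d)"
    using x unfolding qfield_def by blast
  obtain a' b' where y_eq: "y = of_rat a' + of_rat b' * sqrt (real d)"
    using y unfolding qfield_def by blast
  have sq: "sqrt (real d) * sqrt (real d) = of_rat (of_nat d)"
    by simp
  have xy: "x * y = of_rat (a * a' + b * b' * of_nat d) + of_rat (a * b' + a' * b) * sqrt (real d)"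
    unfolding x_eq y_eq of_rat_add of_rat_mult by (simp add: algebra_simps sq[symmetric])
  have "gal d (x * y) = of_rat (a * a' + b * b' * of_nat d) - of_rat (a * b' + a' * b) * sqrt (real d)"
    using xy gal_of_coords[OF irr] by simp
  also have "\<dots> = gal d x * gal d y"
    unfolding x_eq y_eq gal_of_coords[OF irr] of_rat_add of_rat_mult
    by (simp add: algebra_simps sq[symmetric])
  finally show ?thesis
    using xy unfolding qfield_def by blast
qed

lemma qfield_gal_involutive:
  assumes irr: "sqrt (real d) \<notin> \<rat>" and x: "x \<in> qfield d"
  shows "gal d x \<in> qfield d \<and> gal d (gal d x) = x"
proof -
  obtain a b where x_eq: "x = of_rat a + of_rat b * sqrt (real d)"
    using x unfolding qfield_def by blast
  have gx: "gal d x = of_rat a + of_rat (- b) * sqrt (real d)"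
    using x_eq gal_of_coords[OF irr] by (simp add: of_rat_minus)
  have "gal d (gal d x) = x"
    using gx gal_of_coords[OF irr, of a "- b"] x_eq by (simp add: of_rat_minus)
  moreover have "gal d x \<in> qfield d"
    unfolding qfield_def gx by blast
  ultimately show ?thesis by blast
qed

lemma qfield_power_gal_power:
  assumes irr: "sqrt (real d) \<notin> \<rat>" and x: "x \<in> qfield d"
  shows "x ^ n \<in> qfield d \<and> gal d (x ^ n) = gal d x ^ n"
proof (induction n)
  case 0
  then show ?case using qfield_one gal_one[OF irr] by simp
next
  case (Suc n)
  then show ?case using qfield_mult_gal_mult[OF irr x, of "x ^ n"] by simp
qed

lemma unit_norm_powi:
  assumes irr: "sqrt (real d) \<notin> \<rat>" and w: "\<omega> \<in> qfield d" and norm: "\<omega> * gal d \<omega> = 1"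
  shows "\<omega> powi k \<in> qfield d \<and> gal d (\<omega> powi k) * \<omega> powi k = 1"
proof (cases "k \<ge> 0")
  case True
  then obtain n where k: "k = int n"
    by (metis nonneg_eq_int)
  show ?thesis
    using qfield_power_gal_power[OF irr w, of n] norm unfolding k
    by (simp add: power_mult_distrib[symmetric] mult.commute)
next
  case False
  then obtain n where k: "k = - int n"
    by (metis int_cases2 of_nat_0_le_iff)
  have inv: "inverse \<omega> = gal d \<omega>"
    using norm by (simp add: inverse_unique)
  have gw: "gal d \<omega> \<in> qfield d" "gal d (gal d \<omega>) = \<omega>"
    using qfield_gal_involutive[OF irr w] by auto
  have "\<omega> powi k = gal d \<omega> ^ n"
    unfolding k by (simp add: power_int_minus inv[symmetric] power_inverse)
  then show ?thesis
    using qfield_power_gal_power[OF irr gw(1), of n] gw norm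
    by (simp add: power_mult_distrib[symmetric])
qed

lemma varpi_unit_norm:
  assumes "sqrt (real d) \<notin> \<rat>" and "\<omega> \<in> qfield d" and "\<omega> * gal d \<omega> = 1"
  shows "varpi d \<theta> \<omega> e l \<in> qfield d \<and> gal d (varpi d \<theta> \<omega> e l) * varpi d \<theta> \<omega> e l = 1"
  unfolding varpi_def using unit_norm_powi[OF assms] by blast

lemma Rop_apply:
  assumes fin: "finite {e. v e \<noteq> 0}"
  shows "Rop d \<theta> \<omega> l v x =
    v (fst x - fst l, snd x - snd l) * varpi d \<theta> \<omega> (fst x - fst l, snd x - snd l) l"
proof -
  let ?e = "(fst x - fst l, snd x - snd l)"
  have "Rop d \<theta> \<omega> l v x = (\<Sum>e\<in>{e. v e \<noteq> 0}. if e = ?e then v e * varpi d \<theta> \<omega> e l else 0)"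
    unfolding Rop_def
  proof (rule sum.cong)
    fix e
    show "v e * varpi d \<theta> \<omega> e l * bvec (ladd l e) x = (if e = ?e then v e * varpi d \<theta> \<omega> e l else 0)"
      unfolding bvec_def ladd_def by (cases e; cases x; cases l) auto
  qed simp
  also have "\<dots> = (if ?e \<in> {e. v e \<noteq> 0} then v ?e * varpi d \<theta> \<omega> ?e l else 0)"
    using fin by (simp add: sum.delta')
  finally show ?thesis by auto
qed

lemma Rop_apply_ladd:
  assumes "finite {e. v e \<noteq> 0}"
  shows "Rop d \<theta> \<omega> l v (ladd l e) = v e * varpi d \<theta> \<omega> e l"
  using Rop_apply[OF assms, of d \<theta> \<omega> l "ladd l e"] unfolding ladd_def by (cases e) auto

lemma support_Rop:
  assumes fin: "finite {e. v e \<noteq> 0}" and nz: "\<And>e. varpi d \<theta> \<omega> e l \<noteq> 0"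
  shows "{x. Rop d \<theta> \<omega> l v x \<noteq> 0} = ladd l ` {e. v e \<noteq> 0}"
proof (intro set_eqI iffI)
  fix x
  assume "x \<in> {x. Rop d \<theta> \<omega> l v x \<noteq> 0}"
  then have "(fst x - fst l, snd x - snd l) \<in> {e. v e \<noteq> 0}"
    using Rop_apply[OF fin, of d \<theta> \<omega> l x] by auto
  moreover have "x = ladd l (fst x - fst l, snd x - snd l)"
    unfolding ladd_def by simp
  ultimately show "x \<in> ladd l ` {e. v e \<noteq> 0}" by blast
next
  fix x
  assume "x \<in> ladd l ` {e. v e \<noteq> 0}"
  then obtain e where "v e \<noteq> 0" and "x = ladd l e"
    by blast
  then show "x \<in> {x. Rop d \<theta> \<omega> l v x \<noteq> 0}"
    using Rop_apply_ladd[OF fin, of d \<theta> \<omega> l e] nz[of e] by simp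
qed

lemma pairing_Rop_self:
  assumes irr: "sqrt (real d) \<notin> \<rat>" and w: "\<omega> \<in> qfield d" and norm: "\<omega> * gal d \<omega> = 1"
    and v: "v \<in> Vspace d \<theta>"
  shows "pairing d (Rop d \<theta> \<omega> l v) (Rop d \<theta> \<omega> l v) = pairing d v v"
proof -
  let ?S = "{e. v e \<noteq> 0}"
  let ?c = "\<lambda>e. varpi d \<theta> \<omega> e l"
  let ?R = "Rop d \<theta> \<omega> l v"
  have fin: "finite ?S" and vK: "\<And>e. v e \<in> qfield d"
    using v unfolding Vspace_def by auto
  have c: "?c e \<in> qfield d" "gal d (?c e) * ?c e = 1" for e
    using varpi_unit_norm[OF irr w norm] by blast+
  have c_nz: "?c e \<noteq> 0" for e
    using c(2)[of e] by auto
  have inj: "inj_on (ladd l) ?S"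
    unfolding inj_on_def ladd_def by auto
  have "pairing d ?R ?R = (\<Sum>x\<in>ladd l ` ?S. gal d (?R x) * ?R x)"
    unfolding pairing_def support_Rop[OF fin c_nz] by simp
  also have "\<dots> = (\<Sum>e\<in>?S. gal d (v e * ?c e) * (v e * ?c e))"
    by (simp add: sum.reindex[OF inj] Rop_apply_ladd[OF fin])
  also have "\<dots> = (\<Sum>e\<in>?S. gal d (v e) * v e)"
  proof (rule sum.cong)
    fix e
    have "gal d (v e * ?c e) = gal d (v e) * gal d (?c e)"
      using qfield_mult_gal_mult[OF irr vK[of e] c(1)[of e]] by blast
    then show "gal d (v e * ?c e) * (v e * ?c e) = gal d (v e) * v e"
      using c(2)[of e] by (simp add: algebra_simps)
  qed simp
  also have "\<dots> = pairing d v v"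
    unfolding pairing_def by simp
  finally show ?thesis .
qed

theorem lemma8p11:
  fixes d :: nat and \<theta> \<omega> :: real and l :: "real \<times> real" and i :: nat
  assumes "sqrt (real d) \<notin> \<rat>"
    and "\<theta> \<in> qfield d" and "\<theta> \<notin> \<rat>"
    and "\<omega> \<in> qfield d" and "\<omega> \<noteq> 0" and "\<omega> * gal d \<omega> = 1"
    and "l \<in> lat d \<theta>"
    and "i \<in> {1, 2}"
  shows "Mi d \<theta> i (Rop d \<theta> \<omega> l) > -\<infinity>"
proof -
  have unit_values: "emb d i (pairing d (Rop d \<theta> \<omega> l v) (Rop d \<theta> \<omega> l v)) = 1"
    if "v \<in> Vspace d \<theta>" and "pairing d v v = 1" for v
    using pairing_Rop_self[OF assms(1,4,6) that(1)] that(2) gal_one[OF assms(1)]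
    unfolding emb_def by simp
  have "1 \<le> Mi d \<theta> i (Rop d \<theta> \<omega> l)"
    unfolding Mi_def by (rule Inf_greatest) (auto simp: unit_values)
  then show ?thesis by auto
qed

end
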